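(* Let $n_1>n_2>n_3$ be pairwise coprime positive integers forming a minimal system of generators of $\mathcal S=\langle n_1,n_2,n_3\rangle$. Define $$C_1=\min_{\alpha=1,\dots,I_1}\left\{\alpha n_2-[-n_3n_1^{-1}]_{n_2}\left\lfloor\frac{\alpha n_1}{[n_3n_2^{-1}]_{n_1}}\right\rfloor\right\},\quad C_2=\min_{\beta=1,\dots,I_2}\left\{\beta n_1-[-n_3n_2^{-1}]_{n_1}\left\lfloor\frac{\beta n_2}{[n_3n_1^{-1}]_{n_2}}\right\rfloor\right\},$$ $$C_3=\min_{\gamma=1,\dots,I_3}\left\{\gamma n_1-[-n_2n_3^{-1}]_{n_1}\left\lfloor\frac{\gamma n_3}{[n_2n_1^{-1}]_{n_3}}\right\rfloor\right\},$$ where $I_1=\left\lceil [-n_3n_1^{-1}]_{n_2}\frac{[n_3n_2^{-1}]_{n_1}}{n_3}\right\rceil$, $I_2=\left\lceil [-n_3n_2^{-1}]_{n_1}\frac{[n_3n_1^{-1}]_{n_2}}{n_3}\right\rceil$, $I_3=\left\lceil [-n_2n_3^{-1}]_{n_1}\frac{[n_2n_1^{-1}]_{n_3}}{n_2}\right\rceil$. Then the Frobenius number of $\mathcal S$ is $$F(\mathcal S)=C_1n_1+\max\left\{[C_2n_2n_3^{-1}]_{n_1}\,n_3,\ [C_3n_3n_2^{-1}]_{n_1}\,n_2\right\}-n_1-n_2-n_3 .$$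
   Context: $\mathbb N$ denotes the nonnegative integers. For integers $a_1,\dots,a_r$, $\langle a_1,\dots,a_r\rangle=\{\sum t_la_l: t_l\in\mathbb N\}$. Minimal system of generators means that no $n_l$ belongs to the monoid generated by the other two. The Frobenius number $F(\mathcal S)$ is the largest integer not in $\mathcal S$. For an integer $m$ and $n\ge 1$, $[m]_n\in\{0,\dots,n-1\}$ denotes the remainder of $m$ upon division by $n$; for $a$ coprime to $n$, the symbol $a^{-1}$ inside $[\cdot]_n$ denotes a multiplicative inverse of $a$ modulo $n$ (so e.g. $[C_2n_2n_3^{-1}]_{n_1}$ is the remainder modulo $n_1$ of $C_2n_2$ times an inverse of $n_3$ modulo $n_1$). *)

theory Defs
  imports "HOL-Number_Theory.Number_Theory"
begin

definition mon2 :: "int \<Rightarrow> int \<Rightarrow> int set" where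
  "mon2 a b = {int t1 * a + int t2 * b | t1 t2. True}"

definition mon3 :: "int \<Rightarrow> int \<Rightarrow> int \<Rightarrow> int set" where
  "mon3 a b c = {int t1 * a + int t2 * b + int t3 * c | t1 t2 t3. True}"

definition frobenius :: "int set \<Rightarrow> int" where
  "frobenius S = (GREATEST x. x \<notin> S)"

text \<open>[a * b^{-1}]_n : the remainder in {0..n-1} of a times an inverse of b modulo n
  (well defined when b is coprime to n).\<close>
definition remq :: "int \<Rightarrow> int \<Rightarrow> int \<Rightarrow> int" where
  "remq a b n = (THE r. 0 \<le> r \<and> r < n \<and> [r * b = a] (mod n))"

end

theory Submission
  imports Defs
begin

text \<open>
  Let \<open>C\<^sub>i\<close> be the least \<open>c \<ge> 1\<close> with \<open>c n\<^sub>i \<in> \<langle>n\<^sub>j, n\<^sub>k\<rangle>\<close>. The three minima of the theorem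
  compute \<open>C\<^sub>1, C\<^sub>2, C\<^sub>3\<close>: for \<open>u = [-e a\<^sup>-\<^sup>1]\<^sub>b\<close> and \<open>v = [e b\<^sup>-\<^sup>1]\<^sub>a\<close> one has \<open>v b - u a = e\<close>,
  so \<open>(\<alpha> b - u \<lfloor>\<alpha> a / v\<rfloor>) a \<in> \<langle>b, e\<rangle>\<close> for every \<open>\<alpha> \<ge> 1\<close>, every \<open>c a \<in> \<langle>b, e\<rangle>\<close> is bounded
  below by such a value, and replacing \<open>\<alpha>\<close> by \<open>\<alpha> - I\<close> never increases it.

  Writing \<open>C\<^sub>1 n\<^sub>1 = x\<^sub>2 n\<^sub>2 + x\<^sub>3 n\<^sub>3\<close>, \<open>C\<^sub>2 n\<^sub>2 = y\<^sub>1 n\<^sub>1 + y\<^sub>3 n\<^sub>3\<close>, \<open>C\<^sub>3 n\<^sub>3 = z\<^sub>1 n\<^sub>1 + z\<^sub>2 n\<^sub>2\<close>, minimality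
  gives Herzog's relations \<open>C\<^sub>2 = x\<^sub>2 + z\<^sub>2\<close> and \<open>C\<^sub>3 = x\<^sub>3 + y\<^sub>3\<close>. The Apery set of \<open>n\<^sub>1\<close> then lies
  in the L-shape \<open>{b n\<^sub>2 + c n\<^sub>3 | b < C\<^sub>2, c < C\<^sub>3, b < x\<^sub>2 \<or> c < x\<^sub>3}\<close>, whose two outer corners
  minus \<open>n\<^sub>1\<close> are gaps, so \<open>F = C\<^sub>1 n\<^sub>1 + max (y\<^sub>3 n\<^sub>3) (z\<^sub>2 n\<^sub>2) - n\<^sub>1 - n\<^sub>2 - n\<^sub>3\<close>; finally
  \<open>y\<^sub>3 = [C\<^sub>2 n\<^sub>2 n\<^sub>3\<^sup>-\<^sup>1]\<^sub>n\<^sub>1\<close> and \<open>z\<^sub>2 = [C\<^sub>3 n\<^sub>3 n\<^sub>2\<^sup>-\<^sup>1]\<^sub>n\<^sub>1\<close>.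
\<close>

lemma mon2_iff: "x \<in> mon2 a b \<longleftrightarrow> (\<exists>s t. s \<ge> 0 \<and> t \<ge> 0 \<and> x = s * a + t * b)"
proof
  assume "x \<in> mon2 a b"
  then obtain t1 t2 :: nat where "x = int t1 * a + int t2 * b"
    unfolding mon2_def by blast
  then show "\<exists>s t. s \<ge> 0 \<and> t \<ge> 0 \<and> x = s * a + t * b"
    by (intro exI[of _ "int t1"] exI[of _ "int t2"]) simp
next
  assume "\<exists>s t. s \<ge> 0 \<and> t \<ge> 0 \<and> x = s * a + t * b"
  then obtain s t where "s \<ge> 0" "t \<ge> 0" "x = s * a + t * b" by blast
  then have "x = int (nat s) * a + int (nat t) * b" by simp
  then show "x \<in> mon2 a b" unfolding mon2_def by blast
qed

lemma mon2I: "s \<ge> 0 \<Longrightarrow> t \<ge> 0 \<Longrightarrow> x = s * a + t * b \<Longrightarrow> x \<in> mon2 a b"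
  unfolding mon2_iff by blast

lemma mon2_commute: "mon2 a b = mon2 b a"
  unfolding mon2_def by (metis (no_types) add.commute)

lemma mon3_iff:
  "x \<in> mon3 a b c \<longleftrightarrow> (\<exists>s t r. s \<ge> 0 \<and> t \<ge> 0 \<and> r \<ge> 0 \<and> x = s * a + t * b + r * c)"
proof
  assume "x \<in> mon3 a b c"
  then obtain t1 t2 t3 :: nat where "x = int t1 * a + int t2 * b + int t3 * c"
    unfolding mon3_def by blast
  then show "\<exists>s t r. s \<ge> 0 \<and> t \<ge> 0 \<and> r \<ge> 0 \<and> x = s * a + t * b + r * c"
    by (intro exI[of _ "int t1"] exI[of _ "int t2"] exI[of _ "int t3"]) simp
next
  assume "\<exists>s t r. s \<ge> 0 \<and> t \<ge> 0 \<and> r \<ge> 0 \<and> x = s * a + t * b + r * c"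
  then obtain s t r where "s \<ge> 0" "t \<ge> 0" "r \<ge> 0" "x = s * a + t * b + r * c" by blast
  then have "x = int (nat s) * a + int (nat t) * b + int (nat r) * c" by simp
  then show "x \<in> mon3 a b c" unfolding mon3_def by blast
qed

lemma mon3_swap23: "mon3 a b c = mon3 a c b"
  unfolding mon3_def by (metis (no_types) add.assoc add.commute)

lemma frobenius_eqI:
  assumes "F \<notin> S" and "\<And>N. N > F \<Longrightarrow> N \<in> S"
  shows "frobenius S = F"
  unfolding frobenius_def using assms by (intro Greatest_equality) (auto simp: not_less[symmetric])

section \<open>Remainders of quotients\<close>

lemma remq_eq:
  fixes a b n r :: int
  assumes "coprime b n" "0 \<le> r" "r < n" "n dvd r * b - a"
  shows "remq a b n = r"
  unfolding remq_def
proof (rule the_equality)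
  show "0 \<le> r \<and> r < n \<and> [r * b = a] (mod n)"
    using assms by (simp add: cong_iff_dvd_diff)
next
  fix r' assume r': "0 \<le> r' \<and> r' < n \<and> [r' * b = a] (mod n)"
  then have "n dvd r' * b - a" by (simp add: cong_iff_dvd_diff)
  then have "n dvd (r' * b - a) - (r * b - a)" using assms(4) by (rule dvd_diff)
  then have "n dvd (r' - r) * b" by (simp add: algebra_simps)
  then have "n dvd r' - r"
    using assms(1) by (simp add: coprime_commute coprime_dvd_mult_left_iff)
  then have "r' mod n = r mod n" by (simp add: mod_eq_dvd_iff)
  then show "r' = r" using r' assms(2,3) by simp
qed

lemma remq_spec:
  fixes a b n :: int
  assumes "n > 0" "coprime b n"
  shows "0 \<le> remq a b n" "remq a b n < n" "n dvd remq a b n * b - a"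
proof -
  obtain x where x: "[b * x = 1] (mod n)"
    using cong_solve_coprime_int assms(2) by blast
  define r where "r = (a * x) mod n"
  have "[r * b = (a * x) * b] (mod n)"
    unfolding r_def by (rule cong_scalar_right) (simp add: cong_def)
  also have "(a * x) * b = a * (b * x)" by (simp add: ac_simps)
  also have "[a * (b * x) = a * 1] (mod n)"
    using x by (rule cong_scalar_left)
  finally have "n dvd r * b - a" by (simp add: cong_iff_dvd_diff)
  moreover have "0 \<le> r" "r < n" unfolding r_def using assms(1) by auto
  ultimately show "0 \<le> remq a b n" "remq a b n < n" "n dvd remq a b n * b - a"
    using remq_eq[OF assms(2)] by auto
qed

lemma remq_cross_identity:
  fixes a b e :: int
  assumes a: "a \<ge> 2" and b: "b \<ge> 2" and e: "0 < e" "e < b"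
    and cop: "coprime a b" "coprime a e" "coprime b e"
  shows "remq e b a * b - remq (- e) a b * a = e" "1 \<le> remq (- e) a b" "1 \<le> remq e b a"
proof -
  define u where "u = remq (- e) a b"
  have u: "0 \<le> u" "u < b" "b dvd u * a + e"
    using remq_spec[of b a "- e"] b cop(1) unfolding u_def by auto
  have "u \<noteq> 0"
  proof
    assume "u = 0"
    then have "b dvd e" using u(3) by simp
    then show False using cop(3) b by (simp add: coprime_absorb_left)
  qed
  then have u1: "1 \<le> u" using u(1) by simp
  obtain w where w: "u * a + e = b * w" using u(3) by (auto elim: dvdE)
  have "0 \<le> u * a" using u(1) a by simp
  then have "0 < b * w" using w e(1) by linarith
  then have w0: "0 < w" using b by (simp add: zero_less_mult_iff)
  have "u * a \<le> (b - 1) * a" using u(2) a by (intro mult_right_mono) auto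
  then have "b * w < b * (a + 1)" using w e(2) a by (simp add: algebra_simps)
  then have "w \<le> a" using b by simp
  moreover have "w \<noteq> a"
  proof
    assume "w = a"
    then have "e = (b - u) * a" using w by (simp add: algebra_simps)
    then have "a dvd e" by simp
    then show False using cop(2) a by (simp add: coprime_absorb_left)
  qed
  moreover have "w * b - e = u * a" using w by (simp add: algebra_simps)
  ultimately have "remq e b a = w"
    using w0 cop(1) by (intro remq_eq) (auto simp: coprime_commute algebra_simps)
  then show "remq e b a * b - remq (- e) a b * a = e" "1 \<le> remq (- e) a b" "1 \<le> remq e b a"
    using w u1 w0 unfolding u_def by (auto simp: algebra_simps)
qed

section \<open>Least multipliers\<close>

definition is_least_multiplier :: "int set \<Rightarrow> int \<Rightarrow> int \<Rightarrow> bool" where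
  "is_least_multiplier S a C \<longleftrightarrow> C \<ge> 1 \<and> C * a \<in> S \<and> (\<forall>c\<ge>1. c * a \<in> S \<longrightarrow> C \<le> c)"

lemma least_multiplier_le:
  assumes C: "is_least_multiplier (mon2 b e) a C" and "0 < a"
    and "c * a = s * b + t * e" "0 \<le> s" "0 \<le> t" "0 < s * b + t * e"
  shows "C \<le> c"
proof -
  have "0 < c * a" using assms(3,6) by simp
  then have "1 \<le> c" using \<open>0 < a\<close> by (simp add: zero_less_mult_iff)
  moreover have "c * a \<in> mon2 b e" using assms(3-5) by (intro mon2I)
  ultimately show ?thesis using C unfolding is_least_multiplier_def by blast
qed

lemma least_multiplier_less:
  fixes a b e C :: int
  assumes C: "is_least_multiplier (mon2 b e) a C"
    and "0 < a" "0 < b" "2 \<le> e" "coprime a e" and b: "b \<notin> mon2 a e"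
  shows "C < e"
proof -
  define k where "k = remq b a e"
  have k: "0 \<le> k" "k < e" "e dvd k * a - b"
    using remq_spec[of e a b] assms unfolding k_def by auto
  obtain q where q: "k * a - b = e * q" using k(3) by (auto elim: dvdE)
  show ?thesis
  proof (cases "b \<le> k * a")
    case True
    then have "0 \<le> e * q" using q by linarith
    then have "0 \<le> q" using \<open>2 \<le> e\<close> by (simp add: zero_le_mult_iff)
    then have "C \<le> k"
      using q True \<open>0 < a\<close> \<open>0 < b\<close>
      by (intro least_multiplier_le[OF C, of k 1 q]) (auto simp: algebra_simps)
    with k(2) show ?thesis by simp
  next
    case False
    then have "e * q < 0" using q by linarith
    then have "q < 0" using \<open>2 \<le> e\<close> by (simp add: mult_less_0_iff)
    then have "b \<in> mon2 a e" using q k(1) by (intro mon2I[of k "- q"]) (auto simp: algebra_simps)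
    with b show ?thesis by blast
  qed
qed

lemma not_dvd_mult_less:
  fixes a c n :: int
  assumes "1 \<le> c" "c < n" "coprime a n"
  shows "\<not> n dvd c * a"
proof
  assume "n dvd c * a"
  then have "n dvd c" using \<open>coprime a n\<close> by (simp add: coprime_commute coprime_dvd_mult_left_iff)
  with assms(1,2) show False using zdvd_imp_le by fastforce
qed

lemma least_multiplier_repr_pos:
  fixes a b e C :: int
  assumes C: "is_least_multiplier (mon2 b e) a C"
    and "C < b" "C < e" "coprime a b" "coprime a e"
  obtains x y where "1 \<le> x" "1 \<le> y" "C * a = x * b + y * e"
proof -
  obtain x y where xy: "0 \<le> x" "0 \<le> y" "C * a = x * b + y * e"
    using C unfolding is_least_multiplier_def mon2_iff by blast
  have "1 \<le> C" using C unfolding is_least_multiplier_def by blast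
  have "\<not> e dvd C * a" "\<not> b dvd C * a"
    using not_dvd_mult_less[OF \<open>1 \<le> C\<close>] assms(2-) by auto
  then have "x \<noteq> 0" "y \<noteq> 0" using xy(3) by auto
  with xy show thesis using that[of x y] by simp
qed

lemma least_multiplier_coeff_less:
  assumes A: "is_least_multiplier (mon2 b e) a A"
    and pos: "0 < a" "0 < b" "0 < e"
    and "A * a = x * b + y * e" "1 \<le> y"
    and "B * b = p * a + q * e" "1 \<le> p" "0 \<le> q"
  shows "x < B"
proof (rule ccontr)
  assume "\<not> x < B"
  have eq: "(A - p) * a = (x - B) * b + (y + q) * e" using assms(5,7) by (simp add: algebra_simps)
  have "0 \<le> (x - B) * b" "0 < (y + q) * e" using \<open>\<not> x < B\<close> assms(6,9) pos by simp_all
  then have "A \<le> A - p"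
    using least_multiplier_le[OF A pos(1) eq] \<open>\<not> x < B\<close> assms(6,9) by simp
  with \<open>1 \<le> p\<close> show False by simp
qed

lemma least_multiplier_relations:
  fixes n1 n2 n3 C1 C2 C3 x2 x3 y1 y3 z1 z2 :: int
  assumes pos: "0 < n1" "0 < n2" "0 < n3"
    and L1: "is_least_multiplier (mon2 n2 n3) n1 C1"
    and L2: "is_least_multiplier (mon2 n1 n3) n2 C2"
    and L3: "is_least_multiplier (mon2 n1 n2) n3 C3"
    and X: "C1 * n1 = x2 * n2 + x3 * n3" and Y: "C2 * n2 = y1 * n1 + y3 * n3"
    and Z: "C3 * n3 = z1 * n1 + z2 * n2"
    and coeffs: "1 \<le> x2" "1 \<le> x3" "1 \<le> y1" "1 \<le> y3" "1 \<le> z1" "1 \<le> z2"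
  shows "C2 = x2 + z2" "C3 = x3 + y3"
proof -
  have "x2 < C2" using least_multiplier_coeff_less[OF L1 pos X _ Y] coeffs by simp
  have X': "C1 * n1 = x3 * n3 + x2 * n2" using X by simp
  have "x3 < C3"
    using least_multiplier_coeff_less[OF L1[unfolded mon2_commute[of n2]] pos(1,3,2) X' _ Z] coeffs
    by simp
  have "y1 < C1" using least_multiplier_coeff_less[OF L2 pos(2,1,3) Y _ X] coeffs by simp
  have "z1 < C1" using least_multiplier_coeff_less[OF L3 pos(3,1,2) Z _ X'] coeffs by simp
  have "(x3 + y3) * n3 = (C1 - y1) * n1 + (C2 - x2) * n2"
    using X Y by (simp add: algebra_simps)
  from least_multiplier_le[OF L3 pos(3) this] have C3: "C3 \<le> x3 + y3"
    using \<open>y1 < C1\<close> \<open>x2 < C2\<close> pos by (simp add: add_nonneg_pos)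
  have "(x2 + z2) * n2 = (C1 - z1) * n1 + (C3 - x3) * n3"
    using X Z by (simp add: algebra_simps)
  from least_multiplier_le[OF L2 pos(2) this] have C2: "C2 \<le> x2 + z2"
    using \<open>z1 < C1\<close> \<open>x3 < C3\<close> pos by (simp add: add_nonneg_pos)
  have eq: "(C1 - y1 - z1) * n1 = (x2 + z2 - C2) * n2 + (x3 + y3 - C3) * n3"
    using X Y Z by (simp add: algebra_simps)
  have nonneg: "0 \<le> (x2 + z2 - C2) * n2" "0 \<le> (x3 + y3 - C3) * n3" using C2 C3 pos by simp_all
  have "\<not> 0 < (x2 + z2 - C2) * n2 + (x3 + y3 - C3) * n3"
  proof
    assume "0 < (x2 + z2 - C2) * n2 + (x3 + y3 - C3) * n3"
    then have "C1 \<le> C1 - y1 - z1" using least_multiplier_le[OF L1 pos(1) eq] C2 C3 by simp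
    with coeffs show False by simp
  qed
  then have "(x2 + z2 - C2) * n2 = 0" "(x3 + y3 - C3) * n3 = 0" using nonneg by linarith+
  then show "C2 = x2 + z2" "C3 = x3 + y3" using pos by simp_all
qed

section \<open>Computing the least multiplier\<close>

lemma div_add_le:
  fixes x y v :: int
  assumes "0 < v"
  shows "(x + y) div v \<le> x div v + y div v + 1"
proof -
  have "v * ((x + y) div v) < v * (x div v) + v * (y div v) + 2 * v"
    using assms pos_mod_bound[of v x] pos_mod_bound[of v y] pos_mod_sign[of v "x + y"]
      mult_div_mod_eq[of v "x + y"] mult_div_mod_eq[of v x] mult_div_mod_eq[of v y]
    by linarith
  then have "v * ((x + y) div v) < v * (x div v + y div v + 2)" by (simp add: algebra_simps)
  then show ?thesis using assms by (simp add: mult_less_cancel_left_pos)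
qed

text \<open>In the application, \<open>u = [-e a\<^sup>-\<^sup>1]\<^sub>b\<close> and \<open>v = [e b\<^sup>-\<^sup>1]\<^sub>a\<close>, so that
  \<open>candidate \<alpha>\<close> is the expression minimised in the theorem; only the identity \<open>v b - u a = e\<close> matters.\<close>
locale least_multiplier_search =
  fixes a b e u v :: int
  assumes a_pos: "0 < a" and b_pos: "0 < b" and e_pos: "0 < e"
    and u_nonneg: "0 \<le> u" and v_pos: "0 < v"
    and cross: "v * b - u * a = e" and coprime_ab: "coprime a b"
begin

definition candidate :: "int \<Rightarrow> int" where
  "candidate \<alpha> = \<alpha> * b - u * (\<alpha> * a div v)"

lemma candidate_mult_mem:
  assumes "0 \<le> \<alpha>"
  shows "candidate \<alpha> * a \<in> mon2 b e"
proof -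
  define d where "d = \<alpha> * a div v"
  have "0 \<le> d" unfolding d_def using assms a_pos v_pos by (simp add: pos_imp_zdiv_nonneg_iff)
  moreover have "0 \<le> \<alpha> * a - d * v"
    unfolding d_def using v_pos by (simp add: mult.commute minus_mod_eq_mult_div[symmetric])
  moreover have "candidate \<alpha> * a = (\<alpha> * a - d * v) * b + d * e"
    unfolding candidate_def d_def cross[symmetric] by (simp add: algebra_simps)
  ultimately show ?thesis by (intro mon2I)
qed

lemma candidate_lower_bound: "\<alpha> * e \<le> v * candidate \<alpha>"
proof -
  have "u * (v * (\<alpha> * a div v)) \<le> u * (\<alpha> * a)"
    using u_nonneg v_pos by (intro mult_left_mono) (simp_all add: minus_mod_eq_mult_div[symmetric])
  then show ?thesis
    unfolding candidate_def cross[symmetric] by (simp add: algebra_simps)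
qed

lemma candidate_pos:
  assumes "1 \<le> \<alpha>"
  shows "1 \<le> candidate \<alpha>"
proof -
  have "0 < \<alpha> * e" using assms e_pos by simp
  then have "0 < v * candidate \<alpha>" using candidate_lower_bound[of \<alpha>] by linarith
  then show ?thesis using v_pos by (simp add: zero_less_mult_iff)
qed

lemma candidate_le_multiplier:
  assumes c: "1 \<le> c" "c * a \<in> mon2 b e"
  shows "\<exists>\<alpha>\<ge>1. candidate \<alpha> \<le> c"
proof -
  obtain s t where st: "0 \<le> s" "0 \<le> t" "c * a = s * b + t * e"
    using c(2) by (auto simp: mon2_iff)
  txt \<open>The witness is \<open>\<alpha> = (c + t u) / b\<close>, for which \<open>\<alpha> a = s + t v\<close>.\<close>
  have "a * (c + t * u) = b * (s + t * v)"
  proof -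
    have "c * a = s * b + t * (v * b - u * a)" using st(3) cross by simp
    then show ?thesis by (simp add: algebra_simps)
  qed
  then have "b dvd a * (c + t * u)" by simp
  then have "b dvd c + t * u"
    using coprime_ab by (simp add: coprime_commute coprime_dvd_mult_right_iff)
  then obtain \<alpha> where \<alpha>: "c + t * u = b * \<alpha>" by (auto elim: dvdE)
  have "0 \<le> t * u" using st(2) u_nonneg by simp
  then have "0 < b * \<alpha>" using \<alpha> c(1) by linarith
  then have "1 \<le> \<alpha>" using b_pos by (simp add: zero_less_mult_iff)
  have "b * (\<alpha> * a) = b * (s + t * v)"
    using \<open>a * (c + t * u) = b * (s + t * v)\<close> \<alpha> by (simp add: algebra_simps)
  then have "\<alpha> * a = s + t * v" using b_pos by simp
  then have "t * v div v \<le> \<alpha> * a div v" using st(1) v_pos by (intro zdiv_mono1) simp_all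
  then have "t \<le> \<alpha> * a div v" using v_pos by simp
  then have "u * t \<le> u * (\<alpha> * a div v)" using u_nonneg by (rule mult_left_mono)
  then have "candidate \<alpha> \<le> c" unfolding candidate_def using \<alpha> by (simp add: algebra_simps)
  with \<open>1 \<le> \<alpha>\<close> show ?thesis by blast
qed

lemma candidate_shift:
  assumes I: "u * v \<le> I * e" "1 \<le> I" and "I < \<alpha>"
  shows "candidate (\<alpha> - I) \<le> candidate \<alpha>"
proof -
  txt \<open>\<open>candidate\<close> is superadditive up to \<open>u\<close>, and \<open>candidate I \<ge> u\<close> by the choice of \<open>I\<close>.\<close>
  have "v * u \<le> v * candidate I"
    using candidate_lower_bound[of I] I(1) by (simp add: mult.commute)
  then have "u \<le> candidate I" using v_pos by simp
  have "\<alpha> * a div v \<le> (\<alpha> - I) * a div v + I * a div v + 1"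
    using div_add_le[OF v_pos, of "(\<alpha> - I) * a" "I * a"] by (simp add: algebra_simps)
  then have "u * (\<alpha> * a div v) \<le> u * ((\<alpha> - I) * a div v + I * a div v + 1)"
    using u_nonneg by (rule mult_left_mono)
  with \<open>u \<le> candidate I\<close> show ?thesis
    unfolding candidate_def by (simp add: algebra_simps)
qed

lemma candidate_min_in_range:
  assumes I: "u * v \<le> I * e" "1 \<le> I" and "1 \<le> \<alpha>"
  shows "\<exists>\<beta>\<in>{1..I}. candidate \<beta> \<le> candidate \<alpha>"
  using \<open>1 \<le> \<alpha>\<close>
proof (induction "nat \<alpha>" arbitrary: \<alpha> rule: less_induct)
  case less
  show ?case
  proof (cases "\<alpha> \<le> I")
    case True
    with less.prems show ?thesis by auto
  next
    case False
    then obtain \<beta> where "\<beta> \<in> {1..I}" "candidate \<beta> \<le> candidate (\<alpha> - I)"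
      using less.hyps[of "\<alpha> - I"] I(2) by auto
    moreover have "candidate (\<alpha> - I) \<le> candidate \<alpha>" using candidate_shift[OF I] False by simp
    ultimately show ?thesis by (blast intro: order_trans)
  qed
qed

lemma least_multiplier_Min:
  assumes I: "u * v \<le> I * e" "1 \<le> I"
  shows "is_least_multiplier (mon2 b e) a (Min (candidate ` {1..I}))"
proof -
  let ?C = "Min (candidate ` {1..I})"
  have "?C \<in> candidate ` {1..I}" using I(2) by (intro Min_in) auto
  then obtain \<beta> where \<beta>: "1 \<le> \<beta>" "?C = candidate \<beta>" by auto
  have "?C \<le> c" if c: "1 \<le> c" "c * a \<in> mon2 b e" for c
  proof -
    obtain \<alpha> where "1 \<le> \<alpha>" "candidate \<alpha> \<le> c" using candidate_le_multiplier[OF c] by blast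
    then obtain \<gamma> where "\<gamma> \<in> {1..I}" "candidate \<gamma> \<le> c"
      using candidate_min_in_range[OF I] by (meson order_trans)
    then show ?thesis by (meson Min_le finite_atLeastAtMost_int finite_imageI image_eqI order_trans)
  qed
  then show ?thesis
    unfolding is_least_multiplier_def using \<beta> candidate_pos candidate_mult_mem by auto
qed

end

lemma least_multiplier_formula:
  fixes a b e :: int
  assumes "a \<ge> 2" "b \<ge> 2" "0 < e" "e < b" "coprime a b" "coprime a e" "coprime b e"
  shows "is_least_multiplier (mon2 b e) a
    (Min ((\<lambda>\<alpha>. \<alpha> * b - remq (- e) a b * \<lfloor>real_of_int (\<alpha> * a) / real_of_int (remq e b a)\<rfloor>)
      ` {1..\<lceil>real_of_int (remq (- e) a b) * real_of_int (remq e b a) / real_of_int e\<rceil>}))"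
    (is "is_least_multiplier _ _ (Min (?g ` {1..?I}))")
proof -
  define u v where "u = remq (- e) a b" and "v = remq e b a"
  have uv: "v * b - u * a = e" "1 \<le> u" "1 \<le> v"
    using remq_cross_identity[OF assms] unfolding u_def v_def by auto
  interpret least_multiplier_search a b e u v
    using assms uv by unfold_locales auto
  have "real_of_int (u * v) \<le> real_of_int ?I * real_of_int e"
    using \<open>0 < e\<close> unfolding u_def v_def by (simp add: pos_divide_le_eq[symmetric])
  then have I: "u * v \<le> ?I * e" by (simp only: of_int_mult[symmetric] of_int_le_iff)
  have "0 < u * v" using uv(2,3) by simp
  with I have "0 < ?I * e" by linarith
  then have "1 \<le> ?I" using \<open>0 < e\<close> by (simp add: zero_less_mult_iff)
  moreover have "?g = candidate"
    unfolding u_def[symmetric] v_def[symmetric] floor_divide_of_int_eq candidate_def ..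
  ultimately show ?thesis using least_multiplier_Min[OF I] by (simp only:)
qed

section \<open>The Frobenius number\<close>

lemma corner_notin_mon3:
  fixes n1 n2 n3 C1 C2 C3 x2 x3 :: int
  assumes pos: "0 < n1" "0 < n2" "0 < n3"
    and L1: "is_least_multiplier (mon2 n2 n3) n1 C1"
    and L2: "is_least_multiplier (mon2 n1 n3) n2 C2"
    and L3: "is_least_multiplier (mon2 n1 n2) n3 C3"
    and X: "C1 * n1 = x2 * n2 + x3 * n3" "0 \<le> x3" "x2 \<le> C2"
  shows "(x2 - 1) * n2 + (C3 - 1) * n3 - n1 \<notin> mon3 n1 n2 n3"
proof
  assume "(x2 - 1) * n2 + (C3 - 1) * n3 - n1 \<in> mon3 n1 n2 n3"
  then obtain k b c where kbc: "0 \<le> k" "0 \<le> b" "0 \<le> c"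
    "(x2 - 1) * n2 + (C3 - 1) * n3 - n1 = k * n1 + b * n2 + c * n3"
    unfolding mon3_iff by blast
  define p q where "p = x2 - 1 - b" and "q = C3 - 1 - c"
  have E: "p * n2 + q * n3 = (k + 1) * n1"
    using kbc(4) unfolding p_def q_def by (simp add: algebra_simps)
  have "0 < (k + 1) * n1" using kbc(1) pos(1) by simp
  consider "p < 0" | "q < 0" | "0 \<le> p" "0 \<le> q" by linarith
  then show False
  proof cases
    case 1
    have eq: "q * n3 = (k + 1) * n1 + (- p) * n2" using E by (simp add: algebra_simps)
    have "0 \<le> - p" using 1 by simp
    have "0 < (k + 1) * n1 + (- p) * n2"
      by (rule add_pos_nonneg) (use \<open>0 < (k + 1) * n1\<close> \<open>0 \<le> - p\<close> pos in \<open>simp_all add: mult_le_0_iff\<close>)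
    from least_multiplier_le[OF L3 pos(3) eq _ \<open>0 \<le> - p\<close> this] have "C3 \<le> q"
      using kbc(1) by simp
    with kbc(3) show False unfolding q_def by simp
  next
    case 2
    have eq: "p * n2 = (k + 1) * n1 + (- q) * n3" using E by (simp add: algebra_simps)
    have "0 \<le> - q" using 2 by simp
    have "0 < (k + 1) * n1 + (- q) * n3"
      by (rule add_pos_nonneg) (use \<open>0 < (k + 1) * n1\<close> \<open>0 \<le> - q\<close> pos in \<open>simp_all add: mult_le_0_iff\<close>)
    from least_multiplier_le[OF L2 pos(2) eq _ \<open>0 \<le> - q\<close> this] have "C2 \<le> p"
      using kbc(1) by simp
    with kbc(2) X(3) show False unfolding p_def by simp
  next
    case 3
    from least_multiplier_le[OF L1 pos(1) E[symmetric]] have "C1 \<le> k + 1"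
      using 3 E \<open>0 < (k + 1) * n1\<close> by simp
    have "(q - x3) * n3 = (k + 1 - C1) * n1 + (b + 1) * n2"
      using E X(1) unfolding p_def by (simp add: algebra_simps)
    from least_multiplier_le[OF L3 pos(3) this] have "C3 \<le> q - x3"
      using \<open>C1 \<le> k + 1\<close> kbc(2) pos by (simp add: add_nonneg_pos)
    with kbc(3) X(2) show False unfolding q_def by simp
  qed
qed

text \<open>Subtracting the three relations reduces every element of \<open>\<langle>n2, n3\<rangle>\<close> modulo \<open>n1\<close> to a
  lattice point of the L-shaped region below; this region contains the Apery set of \<open>n1\<close>.\<close>
lemma reduce_into_L_shape:
  fixes n1 n2 n3 C1 C2 C3 x2 x3 y1 y3 z1 z2 b c :: int
  assumes pos: "0 < n1" "0 < n2" "0 < n3"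
    and X: "C1 * n1 = x2 * n2 + x3 * n3" and Y: "C2 * n2 = y1 * n1 + y3 * n3"
    and Z: "C3 * n3 = z1 * n1 + z2 * n2"
    and coeffs: "1 \<le> C1" "1 \<le> y1" "1 \<le> z1" "0 \<le> y3" "0 \<le> z2"
    and "0 \<le> b" "0 \<le> c"
  shows "\<exists>k b' c'. 0 \<le> k \<and> 0 \<le> b' \<and> 0 \<le> c' \<and> b * n2 + c * n3 = k * n1 + b' * n2 + c' * n3
    \<and> b' < C2 \<and> c' < C3 \<and> (b' < x2 \<or> c' < x3)"
  using \<open>0 \<le> b\<close> \<open>0 \<le> c\<close>
proof (induction "nat (b * n2 + c * n3)" arbitrary: b c rule: less_induct)
  case less
  have step: ?case if "0 \<le> B" "0 \<le> D" "1 \<le> m" "b * n2 + c * n3 = m * n1 + B * n2 + D * n3" for B D m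
  proof -
    have "0 \<le> B * n2 + D * n3" "0 < m * n1" using that pos by simp_all
    then have "nat (B * n2 + D * n3) < nat (b * n2 + c * n3)" using that(4) by linarith
    from less.hyps[OF this that(1,2)] obtain k b' c' where
      "0 \<le> k" "0 \<le> b'" "0 \<le> c'" "B * n2 + D * n3 = k * n1 + b' * n2 + c' * n3"
      "b' < C2" "c' < C3" "b' < x2 \<or> c' < x3" by blast
    with that show ?thesis
      by (intro exI[of _ "k + m"] exI[of _ b'] exI[of _ c']) (simp add: algebra_simps)
  qed
  consider "C2 \<le> b" | "C3 \<le> c" | "x2 \<le> b" "x3 \<le> c" | "b < C2" "c < C3" "b < x2 \<or> c < x3"
    by linarith
  then show ?case
  proof cases
    case 1
    then show ?thesis using step[of "b - C2" "c + y3" y1] Y less.prems coeffs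
      by (simp add: algebra_simps)
  next
    case 2
    then show ?thesis using step[of "b + z2" "c - C3" z1] Z less.prems coeffs
      by (simp add: algebra_simps)
  next
    case 3
    then show ?thesis using step[of "b - x2" "c - x3" C1] X coeffs
      by (simp add: algebra_simps)
  next
    case 4
    then show ?thesis using less.prems
      by (intro exI[of _ 0] exI[of _ b] exI[of _ c]) simp
  qed
qed

lemma mem_mon3_above_corners:
  fixes n1 n2 n3 C1 C2 C3 x2 x3 y1 y3 z1 z2 N :: int
  assumes pos: "0 < n1" "0 < n2" "0 < n3" and "coprime n1 n2"
    and X: "C1 * n1 = x2 * n2 + x3 * n3" and Y: "C2 * n2 = y1 * n1 + y3 * n3"
    and Z: "C3 * n3 = z1 * n1 + z2 * n2"
    and coeffs: "1 \<le> C1" "1 \<le> y1" "1 \<le> z1" "0 \<le> y3" "0 \<le> z2"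
    and N: "(x2 - 1) * n2 + (C3 - 1) * n3 - n1 < N" "(C2 - 1) * n2 + (x3 - 1) * n3 - n1 < N"
  shows "N \<in> mon3 n1 n2 n3"
proof -
  define j where "j = remq N n2 n1"
  have j: "0 \<le> j" "n1 dvd j * n2 - N"
    using remq_spec[OF pos(1), of n2 N] \<open>coprime n1 n2\<close> unfolding j_def by (auto simp: coprime_commute)
  obtain k b c where kbc: "0 \<le> k" "0 \<le> b" "0 \<le> c" "j * n2 = k * n1 + b * n2 + c * n3"
    "b < C2" "c < C3" "b < x2 \<or> c < x3"
    using reduce_into_L_shape[OF pos X Y Z coeffs j(1), of 0] by auto
  have "b * n2 \<le> (C2 - 1) * n2" "c * n3 \<le> (C3 - 1) * n3"
    using kbc(5,6) pos by (simp_all add: mult_right_mono)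
  moreover have "b * n2 \<le> (x2 - 1) * n2 \<or> c * n3 \<le> (x3 - 1) * n3"
    using kbc(7) pos by (auto simp: mult_right_mono)
  ultimately have "n1 * (- 1) < N - (b * n2 + c * n3)" using N by auto
  have e: "N - (b * n2 + c * n3) = k * n1 - (j * n2 - N)" using kbc(4) by simp
  have "n1 dvd N - (b * n2 + c * n3)" unfolding e by (rule dvd_diff[OF dvd_triv_right j(2)])
  then obtain t where t: "N - (b * n2 + c * n3) = n1 * t" by (auto elim: dvdE)
  from \<open>n1 * (- 1) < N - (b * n2 + c * n3)\<close> have "n1 * (- 1) < n1 * t" unfolding t .
  then have "- 1 < t" by (simp only: mult_less_cancel_left_pos[OF pos(1)])
  then have "0 \<le> t" by simp
  moreover have "N = t * n1 + b * n2 + c * n3" using t by (simp add: algebra_simps)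
  ultimately show ?thesis unfolding mon3_iff using kbc by blast
qed

lemma frobenius_mon3:
  fixes n1 n2 n3 C1 C2 C3 x2 x3 y1 y3 z1 z2 :: int
  assumes pos: "0 < n1" "0 < n2" "0 < n3" and "coprime n1 n2"
    and L1: "is_least_multiplier (mon2 n2 n3) n1 C1"
    and L2: "is_least_multiplier (mon2 n1 n3) n2 C2"
    and L3: "is_least_multiplier (mon2 n1 n2) n3 C3"
    and X: "C1 * n1 = x2 * n2 + x3 * n3" and Y: "C2 * n2 = y1 * n1 + y3 * n3"
    and Z: "C3 * n3 = z1 * n1 + z2 * n2"
    and coeffs: "1 \<le> x2" "1 \<le> x3" "1 \<le> y1" "1 \<le> y3" "1 \<le> z1" "1 \<le> z2"
  shows "frobenius (mon3 n1 n2 n3) = C1 * n1 + max (y3 * n3) (z2 * n2) - n1 - n2 - n3"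
proof -
  have C: "C2 = x2 + z2" "C3 = x3 + y3"
    using least_multiplier_relations[OF pos L1 L2 L3 X Y Z coeffs] by auto
  define F2 F3 where "F2 = (x2 - 1) * n2 + (C3 - 1) * n3 - n1"
    and "F3 = (C2 - 1) * n2 + (x3 - 1) * n3 - n1"
  have "F2 = C1 * n1 + y3 * n3 - n1 - n2 - n3" "F3 = C1 * n1 + z2 * n2 - n1 - n2 - n3"
    unfolding F2_def F3_def using X C by (simp_all add: algebra_simps)
  then have F: "C1 * n1 + max (y3 * n3) (z2 * n2) - n1 - n2 - n3 = max F2 F3"
    by (simp add: max_add_distrib_right max_diff_distrib_left)
  have "1 \<le> C1" using L1 unfolding is_least_multiplier_def by blast
  show ?thesis unfolding F
  proof (rule frobenius_eqI)
    have "F2 \<notin> mon3 n1 n2 n3"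
      unfolding F2_def using corner_notin_mon3[OF pos L1 L2 L3 X] C coeffs by simp
    moreover have "C1 * n1 = x3 * n3 + x2 * n2" using X by simp
    from corner_notin_mon3[OF pos(1,3,2) L1[unfolded mon2_commute[of n2]] L3 L2 this]
    have "F3 \<notin> mon3 n1 n2 n3"
      unfolding F3_def mon3_swap23[of n1 n2] using C coeffs by (simp add: add.commute)
    ultimately show "max F2 F3 \<notin> mon3 n1 n2 n3" by (simp add: max_def)
  next
    fix N assume "max F2 F3 < N"
    then show "N \<in> mon3 n1 n2 n3"
      using mem_mon3_above_corners[OF pos \<open>coprime n1 n2\<close> X Y Z] \<open>1 \<le> C1\<close> coeffs
      unfolding F2_def F3_def by simp
  qed
qed

theorem mainTheorem5:
  fixes n1 n2 n3 :: int
  assumes pos: "n3 > 0" and ord: "n1 > n2" "n2 > n3"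
    and cop: "coprime n1 n2" "coprime n1 n3" "coprime n2 n3"
    and minimal: "n1 \<notin> mon2 n2 n3" "n2 \<notin> mon2 n1 n3" "n3 \<notin> mon2 n1 n2"
  defines "I1 \<equiv> \<lceil>real_of_int (remq (- n3) n1 n2) * real_of_int (remq n3 n2 n1) / real_of_int n3\<rceil>"
    and "I2 \<equiv> \<lceil>real_of_int (remq (- n3) n2 n1) * real_of_int (remq n3 n1 n2) / real_of_int n3\<rceil>"
    and "I3 \<equiv> \<lceil>real_of_int (remq (- n2) n3 n1) * real_of_int (remq n2 n1 n3) / real_of_int n2\<rceil>"
  defines "C1 \<equiv> Min ((\<lambda>\<alpha>. \<alpha> * n2 - remq (- n3) n1 n2 *
                 \<lfloor>real_of_int (\<alpha> * n1) / real_of_int (remq n3 n2 n1)\<rfloor>) ` {1..I1})"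
    and "C2 \<equiv> Min ((\<lambda>\<beta>. \<beta> * n1 - remq (- n3) n2 n1 *
                 \<lfloor>real_of_int (\<beta> * n2) / real_of_int (remq n3 n1 n2)\<rfloor>) ` {1..I2})"
    and "C3 \<equiv> Min ((\<lambda>\<gamma>. \<gamma> * n1 - remq (- n2) n3 n1 *
                 \<lfloor>real_of_int (\<gamma> * n3) / real_of_int (remq n2 n1 n3)\<rfloor>) ` {1..I3})"
  shows "frobenius (mon3 n1 n2 n3) =
           C1 * n1 + max (remq (C2 * n2) n3 n1 * n3) (remq (C3 * n3) n2 n1 * n2) - n1 - n2 - n3"
proof -
  have "n3 \<noteq> 1" using minimal(1) ord by (auto intro: mon2I[of 0 n1])
  then have n3: "2 \<le> n3" using pos by simp
  have L1: "is_least_multiplier (mon2 n2 n3) n1 C1"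
    unfolding C1_def I1_def using n3 ord cop by (intro least_multiplier_formula) auto
  have L2: "is_least_multiplier (mon2 n1 n3) n2 C2"
    unfolding C2_def I2_def using n3 ord cop by (intro least_multiplier_formula) (auto simp: coprime_commute)
  have L3: "is_least_multiplier (mon2 n1 n2) n3 C3"
    unfolding C3_def I3_def using n3 ord cop by (intro least_multiplier_formula) (auto simp: coprime_commute)
  have "C1 < n3" "C2 < n3" "C3 < n2"
    using least_multiplier_less[OF L1] least_multiplier_less[OF L2] least_multiplier_less[OF L3]
      minimal(1,2) minimal(1)[unfolded mon2_commute[of n2]] n3 ord cop
    by (auto simp: coprime_commute)
  obtain x2 x3 where X: "1 \<le> x2" "1 \<le> x3" "C1 * n1 = x2 * n2 + x3 * n3"
    using least_multiplier_repr_pos[OF L1] \<open>C1 < n3\<close> ord cop by auto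
  obtain y1 y3 where Y: "1 \<le> y1" "1 \<le> y3" "C2 * n2 = y1 * n1 + y3 * n3"
    using least_multiplier_repr_pos[OF L2] \<open>C2 < n3\<close> ord cop by (auto simp: coprime_commute)
  obtain z1 z2 where Z: "1 \<le> z1" "1 \<le> z2" "C3 * n3 = z1 * n1 + z2 * n2"
    using least_multiplier_repr_pos[OF L3] \<open>C3 < n2\<close> ord cop by (auto simp: coprime_commute)
  have p: "0 < n1" "0 < n2" "0 < n3" using pos ord by auto
  have "C2 = x2 + z2" "C3 = x3 + y3"
    using least_multiplier_relations[OF p L1 L2 L3 X(3) Y(3) Z(3)] X Y Z by auto
  then have "remq (C2 * n2) n3 n1 = y3" "remq (C3 * n3) n2 n1 = z2"
    using X Y Z \<open>C2 < n3\<close> \<open>C3 < n2\<close> ord cop by (auto intro!: remq_eq simp: coprime_commute)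
  then show ?thesis
    using frobenius_mon3[OF p cop(1) L1 L2 L3 X(3) Y(3) Z(3)] X Y Z by simp
qed

end
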